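(* Let $m\geq 0$ and $k\geq 1$ be integers. If $\lambda$ is a partition with exactly $m$ $k$-hooks (i.e. $\alpha_k(\lambda)=m$), then \[ |\lambda|\geq t(m,k)= m\left(\left\lfloor \frac{m}{k}\right\rfloor +1\right)k-\binom{\lfloor m/k\rfloor +1}{2}k^2. \]
   Context: For a partition $\lambda=(\lambda_1\geq\cdots\geq\lambda_r>0)$, $|\lambda|=\sum_i\lambda_i$ is its weight. For a cell $u$ of the Young diagram of $\lambda$, the hook length of $u$ is the number of cells $v$ of the diagram with $v=u$, or $v$ below $u$ in the same column, or $v$ to the right of $u$ in the same row. $\alpha_k(\lambda)$ is the number of cells of the Young diagram of $\lambda$ with hook length exactly $k$ (the number of $k$-hooks). The number $t(m,k)$ is the weight of the partition with $m$ parts, writing $m=lk+r$ with $0\le r\le k-1$, consisting of $r$ parts equal to $(l+1)k$ followed by $k$ parts equal to $jk$ for each $j=l,l-1,\dots,1$. *)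

theory Defs
  imports Main
begin

definition is_partition :: "nat list \<Rightarrow> bool" where
  "is_partition la \<longleftrightarrow> sorted_wrt (\<ge>) la \<and> (\<forall>x\<in>set la. 0 < x)"

definition weight :: "nat list \<Rightarrow> nat" where
  "weight la = sum_list la"

definition cells :: "nat list \<Rightarrow> (nat \<times> nat) set" where
  "cells la = {(i, j). i < length la \<and> j < la ! i}"

definition hook_length :: "nat list \<Rightarrow> nat \<times> nat \<Rightarrow> nat" where
  "hook_length la u = card {v \<in> cells la.
      v = u \<or> (fst v = fst u \<and> snd v > snd u) \<or> (snd v = snd u \<and> fst v > fst u)}"

definition num_hooks :: "nat \<Rightarrow> nat list \<Rightarrow> nat" where
  "num_hooks k la = card {u \<in> cells la. hook_length la u = k}"

text \<open>The extremal partition: with m = l*k + r, 0 \<le> r < k, it consists of r parts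
  (l+1)*k followed by k parts j*k for each j = l, l-1, ..., 1.\<close>
definition t_partition :: "nat \<Rightarrow> nat \<Rightarrow> nat list" where
  "t_partition m k = (let l = m div k; r = m mod k in
     replicate r ((l + 1) * k) @ concat (map (\<lambda>j. replicate k (j * k)) (rev [1..<l+1])))"

definition t :: "nat \<Rightarrow> nat \<Rightarrow> nat" where
  "t m k = weight (t_partition m k)"

end

theory Submission
  imports Defs
begin

text \<open>Encode \<open>\<lambda>\<close> with \<open>r\<close> parts by its beta-set \<open>B = {\<lambda>\<^sub>i + r - 1 - i}\<close>, so that
  \<open>|\<lambda>| = \<Sum>B - (r choose 2)\<close>. Every \<open>k\<close>-hook yields a bead \<open>x \<in> B\<close> with \<open>x - k \<notin> B\<close>, and distinct
  \<open>k\<close>-hooks lie in distinct rows, hence give distinct beads. Sorting \<open>B\<close> onto the \<open>k\<close> runners of the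
  \<open>k\<close>-abacus, a runner with \<open>e\<close> such beads contributes at least \<open>k (e + 1 choose 2)\<close> to \<open>|\<lambda>|\<close>,
  while the offsets of the runners cost nothing, as the configuration with all beads pushed down
  shows. With \<open>l = m div k\<close>, the convexity estimate \<open>(e + 1 choose 2) \<ge> (l + 1) e - (l + 1 choose 2)\<close>
  summed over the runners gives \<open>|\<lambda>| \<ge> k (l + 1) m - k\<^sup>2 (l + 1 choose 2) = t m k\<close>.\<close>

lemma sum_lessThan_id_eq_choose_two: "(\<Sum>q<n. q) = n choose 2"
  by (simp add: atLeast0LessThan[symmetric] Sum_Ico_nat choose_two)

lemma choose_two_Suc: "Suc n choose 2 = (n choose 2) + n"
  using binomial_Suc_Suc[of n 1] by (simp add: numeral_2_eq_2)

lemma two_mult_choose_two_Suc: "2 * (Suc n choose 2) = Suc n * n"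
  by (induction n) (simp_all add: choose_two_Suc)

lemma mult_le_choose_two_add: "(l + 1) * e \<le> (e + 1 choose 2) + (l + 1 choose 2)"
proof -
  \<comment> \<open>twice the difference is \<open>(e - l) (e - l - 1)\<close>, a product of consecutive integers\<close>
  have "0 \<le> (int e - int l) * (int e - int l - 1)"
    by (cases "int e \<le> int l") (auto intro: mult_nonpos_nonpos mult_nonneg_nonneg)
  then have "int (2 * ((l + 1) * e)) \<le> int (Suc e * e + Suc l * l)"
    by (simp add: algebra_simps)
  then have "2 * ((l + 1) * e) \<le> 2 * (Suc e choose 2) + 2 * (Suc l choose 2)"
    unfolding two_mult_choose_two_Suc of_nat_le_iff .
  then show ?thesis by simp
qed

text \<open>Moving such a bead \<open>x\<close> of a beta-set to the free position \<open>x - k\<close> removes a \<open>k\<close>-hook.\<close>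

definition movable_beads :: "nat \<Rightarrow> nat set \<Rightarrow> nat set" where
  "movable_beads k S = {x \<in> S. k \<le> x \<and> x - k \<notin> S}"

lemma movable_beads_subset: "movable_beads k S \<subseteq> S"
  by (auto simp: movable_beads_def)

lemma card_movable_beads_one_add_card_le:
  assumes "S \<subseteq> {..M}"
  shows "card (movable_beads 1 S) + card S \<le> Suc M"
proof -
  have "(\<lambda>x. x - 1) ` movable_beads 1 S \<subseteq> {..M} - S"
    using assms by (auto simp: movable_beads_def)
  moreover have "inj_on (\<lambda>x. x - 1) (movable_beads 1 S)"
    by (auto simp: movable_beads_def inj_on_def)
  ultimately have "card (movable_beads 1 S) \<le> card ({..M} - S)"
    by (metis card_inj_on_le finite_Diff finite_atMost)
  moreover have "card ({..M} - S) = Suc M - card S"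
    using assms by (simp add: card_Diff_subset finite_subset)
  moreover have "card S \<le> Suc M"
    using assms by (metis card_atMost card_mono finite_atMost)
  ultimately show ?thesis by linarith
qed

lemma card_movable_beads_one_insert_max:
  assumes "finite S" and "\<forall>a\<in>S. a < b"
  shows "card (movable_beads 1 (insert b S)) \<le> Suc (card (movable_beads 1 S))"
proof -
  have "movable_beads 1 (insert b S) \<subseteq> insert b (movable_beads 1 S)"
    by (auto simp: movable_beads_def)
  moreover have "finite (movable_beads 1 S)"
    using assms(1) movable_beads_subset finite_subset by blast
  ultimately show ?thesis
    by (metis card_insert_if card_mono finite_insert le_Suc_eq)
qed

lemma choose_two_card_add_le_sum:
  "finite S \<Longrightarrow> (card S choose 2) + (card (movable_beads 1 S) + 1 choose 2) \<le> \<Sum>S"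
proof (induction S rule: finite_linorder_max_induct)
  case empty
  then show ?case by (simp add: movable_beads_def)
next
  case (insert b S)
  let ?n = "card S" and ?e = "card (movable_beads 1 (insert b S))"
    and ?e' = "card (movable_beads 1 S)"
  have "b \<notin> S" and "insert b S \<subseteq> {..b}"
    using insert.hyps(2) by (auto simp: less_imp_le)
  have "?e \<le> Suc ?e'"
    using card_movable_beads_one_insert_max[OF insert.hyps] .
  then have "?e choose 2 \<le> Suc ?e' choose 2"
    by (rule binomial_right_mono)
  moreover have "?e + Suc ?n \<le> Suc b"
    using card_movable_beads_one_add_card_le[OF \<open>insert b S \<subseteq> {..b}\<close>] insert.hyps(1) \<open>b \<notin> S\<close>
    by simp
  ultimately show ?case
    using insert.IH insert.hyps(1) \<open>b \<notin> S\<close> by (simp add: choose_two_Suc)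
qed

corollary choose_two_card_le_sum: "finite S \<Longrightarrow> card S choose 2 \<le> \<Sum>S"
  using choose_two_card_add_le_sum le_add1 le_trans by blast

text \<open>Position \<open>\<rho> + q k\<close> of the \<open>k\<close>-abacus lies on runner \<open>\<rho> < k\<close> at height \<open>q\<close>.\<close>

definition runner :: "nat \<Rightarrow> nat set \<Rightarrow> nat \<Rightarrow> nat set" where
  "runner k S \<rho> = {q. \<rho> + q * k \<in> S}"

lemma bij_betw_runners:
  assumes "0 < k"
  shows "bij_betw (\<lambda>(\<rho>, q). \<rho> + q * k) (Sigma {..<k} (runner k S)) S"
  using assms
  by (intro bij_betw_byWitness[where f' = "\<lambda>x. (x mod k, x div k)"]) (auto simp: runner_def)

lemma finite_runner: "0 < k \<Longrightarrow> finite S \<Longrightarrow> finite (runner k S \<rho>)"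
  unfolding runner_def
  by (rule finite_vimageI[where h = "\<lambda>q. \<rho> + q * k", unfolded vimage_def]) (auto simp: inj_on_def)

lemma finite_if_finite_runners:
  "0 < k \<Longrightarrow> (\<And>\<rho>. \<rho> < k \<Longrightarrow> finite (runner k S \<rho>)) \<Longrightarrow> finite S"
  using bij_betw_finite[OF bij_betw_runners] by blast

lemma card_eq_sum_card_runner:
  "0 < k \<Longrightarrow> finite S \<Longrightarrow> card S = (\<Sum>\<rho><k. card (runner k S \<rho>))"
  using bij_betw_same_card[OF bij_betw_runners, of k S] by (simp add: card_SigmaI finite_runner)

lemma sum_eq_sum_runner:
  assumes "0 < k" and "finite S"
  shows "\<Sum>S = (\<Sum>\<rho><k. \<rho> * card (runner k S \<rho>) + k * \<Sum>(runner k S \<rho>))"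
proof -
  have "\<Sum>S = (\<Sum>(\<rho>, q)\<in>Sigma {..<k} (runner k S). \<rho> + q * k)"
    using sum.reindex_bij_betw[OF bij_betw_runners[OF assms(1)], of id] by simp
  also have "\<dots> = (\<Sum>\<rho><k. \<Sum>q\<in>runner k S \<rho>. \<rho> + q * k)"
    by (rule sum.Sigma[symmetric]) (auto simp: finite_runner assms)
  also have "\<dots> = (\<Sum>\<rho><k. \<rho> * card (runner k S \<rho>) + k * \<Sum>(runner k S \<rho>))"
    by (simp add: sum.distrib sum_distrib_left mult.commute)
  finally show ?thesis .
qed

lemma runner_movable_beads:
  assumes "\<rho> < k"
  shows "runner k (movable_beads k S) \<rho> = movable_beads 1 (runner k S \<rho>)"
proof -
  have "\<rho> + q * k - k = \<rho> + (q - 1) * k" if "1 \<le> q" for q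
    using that by (cases q) auto
  moreover have "k \<le> \<rho> + q * k \<longleftrightarrow> 1 \<le> q" for q
    using assms by (cases q) auto
  ultimately show ?thesis
    unfolding runner_def movable_beads_def by auto
qed

lemma choose_two_sum_le_runner_sum:
  assumes "0 < k"
  shows "(\<Sum>\<rho><k. n \<rho>) choose 2 \<le> (\<Sum>\<rho><k. \<rho> * n \<rho> + k * (n \<rho> choose 2))"
proof -
  \<comment> \<open>the configuration in which runner \<open>\<rho>\<close> carries its beads at heights \<open>0, \<dots>, n \<rho> - 1\<close>\<close>
  define C where "C = {x. x div k < n (x mod k)}"
  have runner_C: "runner k C \<rho> = {..<n \<rho>}" if "\<rho> < k" for \<rho>
    using that assms by (simp add: runner_def C_def lessThan_def)
  have "finite C"
    using finite_if_finite_runners[OF assms] runner_C by simp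
  have "(\<Sum>\<rho><k. n \<rho>) choose 2 = card C choose 2"
    using card_eq_sum_card_runner[OF assms \<open>finite C\<close>] runner_C by simp
  also have "\<dots> \<le> \<Sum>C"
    using \<open>finite C\<close> by (rule choose_two_card_le_sum)
  also have "\<dots> = (\<Sum>\<rho><k. \<rho> * n \<rho> + k * (n \<rho> choose 2))"
    using sum_eq_sum_runner[OF assms \<open>finite C\<close>] runner_C
    by (simp add: sum_lessThan_id_eq_choose_two)
  finally show ?thesis .
qed

lemma abacus_bound:
  assumes "0 < k" and "finite S"
  shows "(card S choose 2) + k * (\<Sum>\<rho><k. card (movable_beads 1 (runner k S \<rho>)) + 1 choose 2)
    \<le> \<Sum>S"
proof -
  let ?n = "\<lambda>\<rho>. card (runner k S \<rho>)" and ?e = "\<lambda>\<rho>. card (movable_beads 1 (runner k S \<rho>))"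
  have "(card S choose 2) + k * (\<Sum>\<rho><k. ?e \<rho> + 1 choose 2)
      \<le> (\<Sum>\<rho><k. \<rho> * ?n \<rho> + k * (?n \<rho> choose 2)) + (\<Sum>\<rho><k. k * (?e \<rho> + 1 choose 2))"
    using choose_two_sum_le_runner_sum[OF assms(1), of ?n]
    by (simp add: card_eq_sum_card_runner[OF assms] sum_distrib_left)
  also have "\<dots> = (\<Sum>\<rho><k. \<rho> * ?n \<rho> + k * ((?n \<rho> choose 2) + (?e \<rho> + 1 choose 2)))"
    by (simp add: sum.distrib algebra_simps)
  also have "\<dots> \<le> (\<Sum>\<rho><k. \<rho> * ?n \<rho> + k * \<Sum>(runner k S \<rho>))"
    using choose_two_card_add_le_sum[OF finite_runner[OF assms]]
    by (intro sum_mono add_left_mono mult_left_mono) auto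
  also have "\<dots> = \<Sum>S"
    by (rule sum_eq_sum_runner[OF assms, symmetric])
  finally show ?thesis .
qed

lemma card_movable_beads_bound:
  assumes "0 < k" and "finite S"
  shows "k * (l + 1) * card (movable_beads k S) + (card S choose 2)
    \<le> \<Sum>S + k * k * (l + 1 choose 2)"
proof -
  let ?e = "\<lambda>\<rho>. card (movable_beads 1 (runner k S \<rho>))"
  have "finite (movable_beads k S)"
    using assms(2) movable_beads_subset finite_subset by blast
  then have "card (movable_beads k S) = (\<Sum>\<rho><k. ?e \<rho>)"
    using card_eq_sum_card_runner[OF assms(1)] runner_movable_beads by simp
  then have "k * (l + 1) * card (movable_beads k S) = k * (\<Sum>\<rho><k. (l + 1) * ?e \<rho>)"
    by (simp only: sum_distrib_left mult.assoc)
  also have "\<dots> \<le> k * (\<Sum>\<rho><k. (?e \<rho> + 1 choose 2) + (l + 1 choose 2))"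
    by (intro mult_left_mono sum_mono mult_le_choose_two_add) simp
  also have "\<dots> = k * (\<Sum>\<rho><k. ?e \<rho> + 1 choose 2) + k * k * (l + 1 choose 2)"
    by (simp add: sum.distrib algebra_simps)
  finally show ?thesis
    using abacus_bound[OF assms] by linarith
qed

lemma down_closed_eq_lessThan_card:
  assumes "finite S" and "\<And>x y. y \<in> S \<Longrightarrow> x \<le> y \<Longrightarrow> x \<in> S"
  shows "S = {..<card S}"
proof -
  have "x \<in> S" if "x < card S" for x
  proof (rule ccontr)
    assume "x \<notin> S"
    then have "S \<subseteq> {..<x}"
      using assms(2) not_le by blast
    then show False
      using card_mono[OF finite_lessThan, of S x] that by simp
  qed
  moreover have "x < card S" if "x \<in> S" for x
    using card_mono[OF assms(1), of "{..x}"] assms(2) that by fastforce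
  ultimately show ?thesis by blast
qed

lemma partition_nth_antimono:
  assumes "is_partition la" and "i \<le> i'" and "i' < length la"
  shows "la ! i' \<le> la ! i"
  using assms sorted_wrt_nth_less[of "(\<ge>)" la i i']
  by (cases "i = i'") (auto simp: is_partition_def)

definition column :: "nat list \<Rightarrow> nat \<Rightarrow> nat set" where
  "column la j = {i. i < length la \<and> j < la ! i}"

lemma column_eq_lessThan:
  assumes "is_partition la"
  shows "column la j = {..<card (column la j)}"
proof (rule down_closed_eq_lessThan_card)
  fix i i' assume "i' \<in> column la j" and "i \<le> i'"
  then show "i \<in> column la j"
    using partition_nth_antimono[OF assms, of i i'] by (auto simp: column_def)
qed (simp add: column_def)

lemma less_nth_iff_less_card_column:
  assumes "is_partition la" and "i < length la"
  shows "j < la ! i \<longleftrightarrow> i < card (column la j)"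
proof -
  have "i \<in> column la j \<longleftrightarrow> i \<in> {..<card (column la j)}"
    by (subst column_eq_lessThan[OF assms(1)]) (rule refl)
  then show ?thesis using assms(2) by (simp add: column_def)
qed

lemma card_column_le_length: "card (column la j) \<le> length la"
  using card_mono[of "{..<length la}" "column la j"] by (auto simp: column_def)

lemma hook_length_eq:
  assumes "is_partition la" and "(i, j) \<in> cells la"
  shows "hook_length la (i, j) = (la ! i - j) + (card (column la j) - Suc i)"
proof -
  let ?c = "card (column la j)"
  have "i < length la" "j < la ! i" using assms(2) by (auto simp: cells_def)
  have in_column: "(i', j) \<in> cells la \<longleftrightarrow> i' < ?c" for i'
    using less_nth_iff_less_card_column[OF assms(1), of i' j] card_column_le_length[of la j]
    by (auto simp: cells_def)
  have "{v \<in> cells la. v = (i, j) \<or> (fst v = fst (i, j) \<and> snd v > snd (i, j))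
          \<or> (snd v = snd (i, j) \<and> fst v > fst (i, j))}
      = (\<lambda>j'. (i, j')) ` {j..<la ! i} \<union> (\<lambda>i'. (i', j)) ` {Suc i..<?c}" (is "?H = ?arm \<union> ?leg")
  proof (rule set_eqI)
    fix v :: "nat \<times> nat"
    obtain a b where "v = (a, b)" by force
    then show "v \<in> ?H \<longleftrightarrow> v \<in> ?arm \<union> ?leg"
      using \<open>i < length la\<close> \<open>j < la ! i\<close> in_column[of a] by (auto simp: cells_def)
  qed
  moreover have "card (?arm \<union> ?leg) = (la ! i - j) + (?c - Suc i)"
    by (subst card_Un_disjoint) (auto simp: card_image inj_on_def)
  ultimately show ?thesis
    unfolding hook_length_def by simp
qed

lemma hook_length_strict_antimono_row:
  assumes "is_partition la" and "(i, j') \<in> cells la" and "j < j'"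
  shows "hook_length la (i, j') < hook_length la (i, j)"
proof -
  have "(i, j) \<in> cells la" using assms(2,3) by (auto simp: cells_def)
  moreover have "card (column la j') \<le> card (column la j)"
    using assms(3) by (intro card_mono) (auto simp: column_def)
  ultimately show ?thesis
    using assms hook_length_eq[OF assms(1)] by (simp add: cells_def diff_le_mono)
qed

text \<open>\<open>beta la i\<close> is the hook length of the cell \<open>(i, 0)\<close>.\<close>

definition beta :: "nat list \<Rightarrow> nat \<Rightarrow> nat" where
  "beta la i = la ! i + (length la - Suc i)"

definition beta_set :: "nat list \<Rightarrow> nat set" where
  "beta_set la = beta la ` {..<length la}"

lemma finite_beta_set [simp]: "finite (beta_set la)"
  by (simp add: beta_set_def)

lemma beta_strict_antimono:
  assumes "is_partition la" and "i < i'" and "i' < length la"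
  shows "beta la i' < beta la i"
  using partition_nth_antimono[OF assms(1), of i i'] assms(2,3) by (simp add: beta_def)

lemma inj_on_beta: "is_partition la \<Longrightarrow> inj_on (beta la) {..<length la}"
  by (rule inj_onI) (metis beta_strict_antimono lessThan_iff linorder_cases less_irrefl)

lemma card_beta_set: "is_partition la \<Longrightarrow> card (beta_set la) = length la"
  by (simp add: beta_set_def card_image inj_on_beta)

lemma sum_beta_set:
  assumes "is_partition la"
  shows "\<Sum>(beta_set la) = weight la + (length la choose 2)"
proof -
  have "\<Sum>(beta_set la) = (\<Sum>i<length la. beta la i)"
    using assms by (simp add: beta_set_def sum.reindex inj_on_beta)
  also have "\<dots> = (\<Sum>i<length la. la ! i) + (\<Sum>i<length la. length la - Suc i)"
    unfolding beta_def by (rule sum.distrib)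
  also have "(\<Sum>i<length la. length la - Suc i) = (\<Sum>i<length la. i)"
    by (rule sum.nat_diff_reindex)
  finally show ?thesis
    by (simp add: weight_def sum_list_sum_nth atLeast0LessThan sum_lessThan_id_eq_choose_two)
qed

lemma beta_mem_movable_beads:
  assumes "is_partition la" and "(i, j) \<in> cells la"
  shows "beta la i \<in> movable_beads (hook_length la (i, j)) (beta_set la)"
proof -
  let ?r = "length la" and ?c = "card (column la j)"
  have "i < ?r" "j < la ! i" using assms(2) by (auto simp: cells_def)
  have "i < ?c"
    using less_nth_iff_less_card_column[OF assms(1) \<open>i < ?r\<close>] \<open>j < la ! i\<close> by simp
  have "?c \<le> ?r" by (rule card_column_le_length)
  have hook: "hook_length la (i, j) = (la ! i - j) + (?c - Suc i)"
    by (rule hook_length_eq[OF assms])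
  \<comment> \<open>the rows meeting column \<open>j\<close> have beta-numbers above \<open>j + (r - c)\<close>, the others below it\<close>
  have not_beta: "beta la i' \<noteq> j + (?r - ?c)" if "i' < ?r" for i'
  proof (cases "i' < ?c")
    case True
    then have "j < la ! i'"
      using less_nth_iff_less_card_column[OF assms(1) that] by simp
    then show ?thesis using True \<open>?c \<le> ?r\<close> by (simp add: beta_def)
  next
    case False
    then have "la ! i' \<le> j"
      using less_nth_iff_less_card_column[OF assms(1) that, of j] not_less by blast
    then show ?thesis using False that by (simp add: beta_def)
  qed
  have "beta la i - hook_length la (i, j) = j + (?r - ?c)"
    using hook \<open>i < ?c\<close> \<open>?c \<le> ?r\<close> \<open>j < la ! i\<close> by (simp add: beta_def)
  then have "beta la i - hook_length la (i, j) \<notin> beta_set la"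
    unfolding beta_set_def using not_beta by (metis imageE lessThan_iff)
  moreover have "hook_length la (i, j) \<le> beta la i"
    using hook \<open>i < ?c\<close> \<open>?c \<le> ?r\<close> by (simp add: beta_def)
  moreover have "beta la i \<in> beta_set la"
    using \<open>i < ?r\<close> by (simp add: beta_set_def)
  ultimately show ?thesis
    by (simp add: movable_beads_def)
qed

lemma num_hooks_le_card_movable_beads:
  assumes "is_partition la"
  shows "num_hooks k la \<le> card (movable_beads k (beta_set la))"
proof -
  let ?K = "{u \<in> cells la. hook_length la u = k}"
  have "inj_on (\<lambda>u. beta la (fst u)) ?K"
  proof (rule inj_onI)
    fix u v assume u: "u \<in> ?K" and v: "v \<in> ?K" and eq: "beta la (fst u) = beta la (fst v)"
    obtain i j i' j' where uv: "u = (i, j)" "v = (i', j')" by force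
    then have "i < length la" "i' < length la" using u v by (auto simp: cells_def)
    then have "i = i'" using eq uv inj_on_beta[OF assms] by (simp add: inj_on_eq_iff)
    moreover have "hook_length la (i, j) = hook_length la (i', j')"
      and "(i, j) \<in> cells la" "(i', j') \<in> cells la"
      using u v uv by auto
    ultimately have "\<not> j < j'" "\<not> j' < j"
      using hook_length_strict_antimono_row[OF assms] by (metis less_irrefl)+
    then show "u = v" using uv \<open>i = i'\<close> by simp
  qed
  moreover have "(\<lambda>u. beta la (fst u)) ` ?K \<subseteq> movable_beads k (beta_set la)"
    using beta_mem_movable_beads[OF assms] by force
  moreover have "finite (movable_beads k (beta_set la))"
    using movable_beads_subset finite_beta_set by (rule finite_subset)
  ultimately show ?thesis
    unfolding num_hooks_def by (rule card_inj_on_le)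
qed

lemma sum_list_concat_replicate:
  "sum_list (concat (map (\<lambda>j. replicate k (f j)) xs)) = k * sum_list (map f xs :: nat list)"
  by (induction xs) (simp_all add: sum_list_replicate algebra_simps)

lemma t_eq: "t m k = m mod k * ((m div k + 1) * k) + k * k * (m div k + 1 choose 2)"
proof -
  let ?l = "m div k"
  have "sum_list (map (\<lambda>j. j * k) (rev [1..<?l + 1])) = sum_list (map (\<lambda>j. j * k) [1..<?l + 1])"
    by (simp only: rev_map[symmetric] sum_list.rev)
  also have "\<dots> = (\<Sum>j\<in>{1..<?l + 1}. j * k)"
    by (simp only: sum_set_upt_conv_sum_list_nat[symmetric] set_upt)
  also have "\<dots> = k * \<Sum>{1..<?l + 1}"
    by (simp only: sum_distrib_left mult.commute)
  also have "\<Sum>{1..<?l + 1} = (?l + 1 choose 2)"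
    by (simp add: Sum_Ico_nat choose_two)
  finally show ?thesis
    by (simp add: t_def weight_def t_partition_def Let_def sum_list_replicate
        sum_list_concat_replicate)
qed

lemma t_add_choose_two: "t m k + k ^ 2 * (m div k + 1 choose 2) = m * (m div k + 1) * k"
proof -
  have "r * ((l + 1) * k) + k * k * (2 * (Suc l choose 2)) = (r + l * k) * (l + 1) * k" for r l
    unfolding two_mult_choose_two_Suc by (simp add: algebra_simps)
  from this[of "m mod k" "m div k"] show ?thesis
    by (simp add: t_eq power2_eq_square)
qed

theorem theorem3p1:
  fixes m k :: nat and la :: "nat list"
  assumes "k \<ge> 1"
    and "is_partition la"
    and "num_hooks k la = m"
  shows "weight la \<ge> t m k \<and>
         int (t m k) = int m * (int (m div k) + 1) * int k
                       - int ((m div k + 1) choose 2) * int k ^ 2"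
proof
  let ?B = "beta_set la" and ?l = "m div k"
  have "k * (?l + 1) * m \<le> k * (?l + 1) * card (movable_beads k ?B)"
    using num_hooks_le_card_movable_beads[OF assms(2), of k] assms(3) by simp
  moreover have "k * (?l + 1) * card (movable_beads k ?B) + (card ?B choose 2)
      \<le> \<Sum>?B + k * k * (?l + 1 choose 2)"
    using assms(1) by (intro card_movable_beads_bound) simp_all
  ultimately have "k * (?l + 1) * m + (card ?B choose 2) \<le> \<Sum>?B + k * k * (?l + 1 choose 2)"
    by linarith
  then have "k * (?l + 1) * m \<le> weight la + k ^ 2 * (?l + 1 choose 2)"
    using sum_beta_set[OF assms(2)] card_beta_set[OF assms(2)] by (simp add: power2_eq_square)
  then show "weight la \<ge> t m k"
    using t_add_choose_two[of m k] by (simp add: algebra_simps)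
  show "int (t m k) = int m * (int ?l + 1) * int k - int (?l + 1 choose 2) * int k ^ 2"
    using arg_cong[OF t_add_choose_two[of m k], of int] by (simp add: algebra_simps)
qed

end
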